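(* Let $\mathcal{X}_0,\mathcal{X}_1$ be ri spaces over $(\Omega,\mu)$ with fundamental functions $\phi_{\mathcal{X}_0},\phi_{\mathcal{X}_1}$. Then $\phi_{\Delta(\mathcal{X}_0,\mathcal{X}_1)}=\phi_{\mathcal{X}_0}\vee\phi_{\mathcal{X}_1}$ and $\phi_{\Sigma(\mathcal{X}_0,\mathcal{X}_1)}=\phi_{\mathcal{X}_0}\wedge\phi_{\mathcal{X}_1}$.
   Context: $(\Omega,\mu)$ has $\mu(\Omega)=1$ and is purely non-atomic or completely atomic with atoms of equal measure. An ri space is a Banach function space over $(\Omega,\mu)$ with rearrangement invariant Banach function norm; fundamental function $\phi_{\mathcal{X}}(t)=\|\chi_{E_t}\|_{\mathcal{X}}$ with $\mu(E_t)=t$. $\Delta(\mathcal{X}_0,\mathcal{X}_1)=\mathcal{X}_0\cap\mathcal{X}_1$ with norm $\|f\|_{\mathcal{X}_0}\vee\|f\|_{\mathcal{X}_1}$; $\Sigma(\mathcal{X}_0,\mathcal{X}_1)=\mathcal{X}_0+\mathcal{X}_1$ with norm $\inf\{\|f_0\|_{\mathcal{X}_0}+\|f_1\|_{\mathcal{X}_1}:f=f_0+f_1,\ f_i\in\mathcal{X}_i\}$. *)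

theory Defs
  imports "HOL-Probability.Probability"
begin

definition nonatomic_measure :: "'a measure \<Rightarrow> bool" where
  "nonatomic_measure M \<longleftrightarrow>
     (\<forall>A\<in>sets M. 0 < emeasure M A \<longrightarrow>
        (\<exists>B\<in>sets M. B \<subseteq> A \<and> 0 < emeasure M B \<and> emeasure M B < emeasure M A))"

definition is_atom :: "'a measure \<Rightarrow> 'a set \<Rightarrow> bool" where
  "is_atom M A \<longleftrightarrow> A \<in> sets M \<and> 0 < emeasure M A \<and>
     (\<forall>B\<in>sets M. B \<subseteq> A \<longrightarrow> emeasure M B = 0 \<or> emeasure M B = emeasure M A)"

definition completely_atomic_equal :: "'a measure \<Rightarrow> bool" where
  "completely_atomic_equal M \<longleftrightarrow>
     (\<forall>B\<in>sets M. 0 < emeasure M B \<longrightarrow> (\<exists>A. is_atom M A \<and> A \<subseteq> B)) \<and>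
     (\<forall>A A'. is_atom M A \<longrightarrow> is_atom M A' \<longrightarrow> emeasure M A = emeasure M A')"

definition banach_function_norm :: "'a measure \<Rightarrow> (('a \<Rightarrow> ennreal) \<Rightarrow> ennreal) \<Rightarrow> bool" where
  "banach_function_norm M \<rho> \<longleftrightarrow>
     (\<forall>f\<in>borel_measurable M. \<rho> f = 0 \<longleftrightarrow> (AE x in M. f x = 0)) \<and>
     (\<forall>f\<in>borel_measurable M. \<forall>a::ennreal. a < \<infinity> \<longrightarrow> \<rho> (\<lambda>x. a * f x) = a * \<rho> f) \<and>
     (\<forall>f\<in>borel_measurable M. \<forall>g\<in>borel_measurable M. \<rho> (\<lambda>x. f x + g x) \<le> \<rho> f + \<rho> g) \<and>
     (\<forall>f\<in>borel_measurable M. \<forall>g\<in>borel_measurable M.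
        (AE x in M. g x \<le> f x) \<longrightarrow> \<rho> g \<le> \<rho> f) \<and>
     (\<forall>F f. (\<forall>n. F n \<in> borel_measurable M) \<longrightarrow> f \<in> borel_measurable M \<longrightarrow>
        (AE x in M. incseq (\<lambda>n. F n x) \<and> f x = (SUP n. F n x)) \<longrightarrow>
        \<rho> f = (SUP n. \<rho> (F n))) \<and>
     (\<forall>E\<in>sets M. emeasure M E < \<infinity> \<longrightarrow> \<rho> (indicator E) < \<infinity>) \<and>
     (\<forall>E\<in>sets M. emeasure M E < \<infinity> \<longrightarrow>
        (\<exists>C::ennreal. C < \<infinity> \<and>
           (\<forall>f\<in>borel_measurable M. (\<integral>\<^sup>+x\<in>E. f x \<partial>M) \<le> C * \<rho> f)))"

definition ri_norm :: "'a measure \<Rightarrow> (('a \<Rightarrow> ennreal) \<Rightarrow> ennreal) \<Rightarrow> bool" where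
  "ri_norm M \<rho> \<longleftrightarrow> banach_function_norm M \<rho> \<and>
     (\<forall>f\<in>borel_measurable M. \<forall>g\<in>borel_measurable M.
        (\<forall>t. emeasure M {x\<in>space M. t < f x} = emeasure M {x\<in>space M. t < g x}) \<longrightarrow>
        \<rho> f = \<rho> g)"

definition bfs :: "'a measure \<Rightarrow> (('a \<Rightarrow> ennreal) \<Rightarrow> ennreal) \<Rightarrow> ('a \<Rightarrow> real) set" where
  "bfs M \<rho> = {f. f \<in> borel_measurable M \<and> \<rho> (\<lambda>x. ennreal \<bar>f x\<bar>) < \<infinity>}"

definition bfs_norm :: "(('a \<Rightarrow> ennreal) \<Rightarrow> ennreal) \<Rightarrow> ('a \<Rightarrow> real) \<Rightarrow> ennreal" where
  "bfs_norm \<rho> f = \<rho> (\<lambda>x. ennreal \<bar>f x\<bar>)"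

text \<open>Norm of Delta(X0,X1) = X0 \<inter> X1.\<close>
definition delta_norm :: "(('a \<Rightarrow> ennreal) \<Rightarrow> ennreal) \<Rightarrow> (('a \<Rightarrow> ennreal) \<Rightarrow> ennreal)
    \<Rightarrow> ('a \<Rightarrow> real) \<Rightarrow> ennreal" where
  "delta_norm \<rho>0 \<rho>1 f = max (bfs_norm \<rho>0 f) (bfs_norm \<rho>1 f)"

text \<open>Norm of Sigma(X0,X1) = X0 + X1.\<close>
definition sigma_norm :: "'a measure \<Rightarrow> (('a \<Rightarrow> ennreal) \<Rightarrow> ennreal) \<Rightarrow> (('a \<Rightarrow> ennreal) \<Rightarrow> ennreal)
    \<Rightarrow> ('a \<Rightarrow> real) \<Rightarrow> ennreal" where
  "sigma_norm M \<rho>0 \<rho>1 f = Inf {bfs_norm \<rho>0 f0 + bfs_norm \<rho>1 f1 | f0 f1.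
      f0 \<in> bfs M \<rho>0 \<and> f1 \<in> bfs M \<rho>1 \<and> (\<forall>x\<in>space M. f x = f0 x + f1 x)}"

text \<open>Fundamental function of a norm N: phi(t) = N(chi_E) for a measurable E with mu(E) = t
  (well defined for ri norms; meaningful for t in the range of mu).\<close>
definition fundamental_function :: "'a measure \<Rightarrow> (('a \<Rightarrow> real) \<Rightarrow> ennreal) \<Rightarrow> real \<Rightarrow> ennreal" where
  "fundamental_function M N t = N (indicator (SOME E. E \<in> sets M \<and> measure M E = t))"

end

theory Submission
  imports Defs
begin

(* The statement for Delta is immediate, its norm being a pointwise maximum, and
   splitting chi_E as chi_E + 0 or 0 + chi_E shows phi_Sigma <= min(phi_0, phi_1). Conversely, every
   decomposition chi_E = f0 + f1 has |f0| + |f1| >= 1 on E, so it suffices to know that in every ri space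

     (integral over E of g) * phi_X(mu E) <= mu(E) * ||g||_X.

   For a simple g this is an averaging argument: cut E into N sets of measure mu(E)/N, approximate the
   level sets of g from inside by unions of these sets, and add up the N cyclic shifts of the resulting
   step function. All shifts are equimeasurable with it, hence have the same norm, while their sum is a
   constant multiple of chi_E. The pieces exist because the measure is non-atomic (Sierpinski's
   intermediate value property) or consists of finitely many atoms of equal mass; in the non-atomic case
   the rounding error vanishes as N grows. Monotone convergence extends the inequality to all g. *)

lemma add_mod_inj:
  fixes i j k N :: nat
  assumes "i < N" "j < N" "(i + k) mod N = (j + k) mod N"
  shows "i = j"
  using assms
proof (induction i j rule: linorder_wlog)
  case (le i j)
  then have "N dvd (j + k) - (i + k)"
    using mod_eq_dvd_iff_nat[of "i + k" "j + k" N] by simp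
  then have "N dvd j - i"
    by simp
  moreover have "j - i < N"
    using le by simp
  ultimately have "j - i = 0"
    using dvd_imp_le by (metis gr0I leD)
  then show ?case
    using le by simp
qed (metis)

lemma bij_betw_add_mod: "0 < N \<Longrightarrow> bij_betw (\<lambda>j. (j + k) mod N) {..<N::nat} {..<N}"
  by (intro bij_betw_imageI endo_inj_surj inj_onI) (auto intro: add_mod_inj)

lemma disjoint_family_on_Plus:
  assumes P: "disjoint_family_on P I" and Q: "disjoint_family_on Q J"
    and PQ: "\<And>i j. i \<in> I \<Longrightarrow> j \<in> J \<Longrightarrow> P i \<inter> Q j = {}"
  shows "disjoint_family_on (case_sum P Q) (I <+> J)"
  unfolding disjoint_family_on_def
proof (intro ballI impI)
  fix x y assume x: "x \<in> I <+> J" and y: "y \<in> I <+> J" and "x \<noteq> y"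
  then show "case_sum P Q x \<inter> case_sum P Q y = {}"
    by (elim PlusE) (auto dest: disjoint_family_onD[OF P] disjoint_family_onD[OF Q] PQ)
qed

lemma disjoint_family_on_Sigma:
  assumes A: "disjoint_family_on A V" and Q: "\<And>v. v \<in> V \<Longrightarrow> disjoint_family_on (Q v) (J v)"
    and QA: "\<And>v j. v \<in> V \<Longrightarrow> j \<in> J v \<Longrightarrow> Q v j \<subseteq> A v"
  shows "disjoint_family_on (\<lambda>(v, j). Q v j) (Sigma V J)"
  unfolding disjoint_family_on_def
proof (intro ballI impI)
  fix p q assume "p \<in> Sigma V J" "q \<in> Sigma V J" "p \<noteq> q"
  then obtain v j w k where p: "p = (v, j)" "v \<in> V" "j \<in> J v" and q: "q = (w, k)" "w \<in> V" "k \<in> J w"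
    by blast
  show "(\<lambda>(v, j). Q v j) p \<inter> (\<lambda>(v, j). Q v j) q = {}"
  proof (cases "v = w")
    case True
    with p q \<open>p \<noteq> q\<close> show ?thesis
      using disjoint_family_onD[OF Q] by auto
  next
    case False
    with p q show ?thesis
      using disjoint_family_onD[OF A] QA by fastforce
  qed
qed



lemma emeasure_step_function_greater:
  fixes a :: "'i \<Rightarrow> ennreal"
  assumes I: "finite I" and disj: "disjoint_family_on P I"
    and P: "\<And>i. i \<in> I \<Longrightarrow> P i \<in> sets M" "\<And>i. i \<in> I \<Longrightarrow> emeasure M (P i) = c"
  shows "emeasure M {x\<in>space M. r < (\<Sum>i\<in>I. a i * indicator (P i) x)} = of_nat (card {i\<in>I. r < a i}) * c"
proof -
  have "{x\<in>space M. r < (\<Sum>i\<in>I. a i * indicator (P i) x)} = (\<Union>i\<in>{i\<in>I. r < a i}. P i)"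
  proof (intro equalityI subsetI)
    fix x assume x: "x \<in> {x\<in>space M. r < (\<Sum>i\<in>I. a i * indicator (P i) x)}"
    have "\<exists>i\<in>I. x \<in> P i"
    proof (rule ccontr)
      assume "\<not> (\<exists>i\<in>I. x \<in> P i)"
      then have "(\<Sum>i\<in>I. a i * indicator (P i) x) = 0"
        by (intro sum.neutral) auto
      then show False
        using x by simp
    qed
    then obtain i where i: "i \<in> I" "x \<in> P i"
      by blast
    then show "x \<in> (\<Union>i\<in>{i\<in>I. r < a i}. P i)"
      using x sum_indicator_disjoint_family[OF disj i(2) I i(1), of a] by auto
  next
    fix x assume "x \<in> (\<Union>i\<in>{i\<in>I. r < a i}. P i)"
    then obtain i where i: "i \<in> I" "x \<in> P i" "r < a i"
      by blast
    then show "x \<in> {x\<in>space M. r < (\<Sum>i\<in>I. a i * indicator (P i) x)}"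
      using sum_indicator_disjoint_family[OF disj i(2) I i(1), of a] P(1) sets.sets_into_space by fastforce
  qed
  also have "emeasure M \<dots> = (\<Sum>i\<in>{i\<in>I. r < a i}. emeasure M (P i))"
    using I P(1) disj by (intro sum_emeasure[symmetric]) (auto simp: disjoint_family_on_def)
  also have "\<dots> = of_nat (card {i\<in>I. r < a i}) * c"
    using P(2) by simp
  finally show ?thesis .
qed

lemma simple_function_level_set: "simple_function M u \<Longrightarrow> {x\<in>space M. u x = v} \<in> sets M"
proof -
  assume u: "simple_function M u"
  have "{x\<in>space M. u x = v} = u -` {v} \<inter> space M"
    by auto
  then show ?thesis
    using simple_functionD(2)[OF u] by simp
qed

lemma (in finite_measure) nn_integral_simple_function_level_sets:
  assumes u: "simple_function M u"
  shows "integral\<^sup>N M u = (\<Sum>v\<in>u ` space M - {0}. v * ennreal (measure M {x\<in>space M. u x = v}))"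
proof -
  have "integral\<^sup>N M u = (\<Sum>v\<in>u ` space M. v * emeasure M (u -` {v} \<inter> space M))"
    by (simp add: nn_integral_eq_simple_integral[OF u] simple_integral_def)
  also have "\<dots> = (\<Sum>v\<in>u ` space M - {0}. v * emeasure M (u -` {v} \<inter> space M))"
    using u by (intro sum.mono_neutral_right) (auto simp: simple_function_def)
  also have "\<dots> = (\<Sum>v\<in>u ` space M - {0}. v * ennreal (measure M {x\<in>space M. u x = v}))"
  proof (intro sum.cong refl)
    fix v
    have "u -` {v} \<inter> space M = {x\<in>space M. u x = v}"
      by auto
    then show "v * emeasure M (u -` {v} \<inter> space M) = v * ennreal (measure M {x\<in>space M. u x = v})"
      by (simp add: emeasure_eq_measure)
  qed
  finally show ?thesis .
qed

lemma ennreal_le_of_le_add_inverse: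
  fixes x y k :: ennreal and b :: real
  assumes le: "\<And>N::nat. 0 < N \<Longrightarrow> x \<le> y + ennreal (b / real N) * k" and b: "0 \<le> b" and k: "k < \<infinity>"
  shows "x \<le> y"
proof -
  obtain r where r: "k = ennreal r" "0 \<le> r"
    using k by (cases k) auto
  have "(\<lambda>N. b / real N * r) \<longlonglongrightarrow> 0 * r"
    by (intro tendsto_mult lim_const_over_n tendsto_const)
  then have "(\<lambda>N. y + ennreal (b / real N * r)) \<longlonglongrightarrow> y + ennreal 0"
    by (intro tendsto_add tendsto_const tendsto_ennrealI) simp
  moreover have "x \<le> y + ennreal (b / real N * r)" if "1 \<le> N" for N
  proof -
    have "x \<le> y + ennreal (b / real N) * k"
      using that by (intro le) simp
    moreover have "ennreal (b / real N) * k = ennreal (b / real N * r)"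
      using b r by (simp only: ennreal_mult[symmetric] divide_nonneg_nonneg of_nat_0_le_iff)
    ultimately show ?thesis
      by simp
  qed
  ultimately show ?thesis
    by (intro LIMSEQ_le_const) auto
qed

section \<open>Banach function norms\<close>

lemma banach_function_norm_zero: "banach_function_norm M \<rho> \<Longrightarrow> \<rho> (\<lambda>x. 0) = 0"
  unfolding banach_function_norm_def by auto

lemma banach_function_norm_mono_AE:
  "banach_function_norm M \<rho> \<Longrightarrow> f \<in> borel_measurable M \<Longrightarrow> g \<in> borel_measurable M
    \<Longrightarrow> (AE x in M. g x \<le> f x) \<Longrightarrow> \<rho> g \<le> \<rho> f"
  unfolding banach_function_norm_def by auto

lemma banach_function_norm_mono:
  "banach_function_norm M \<rho> \<Longrightarrow> f \<in> borel_measurable M \<Longrightarrow> g \<in> borel_measurable M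
    \<Longrightarrow> (\<And>x. x \<in> space M \<Longrightarrow> g x \<le> f x) \<Longrightarrow> \<rho> g \<le> \<rho> f"
  unfolding banach_function_norm_def by auto

lemma banach_function_norm_cmult:
  "banach_function_norm M \<rho> \<Longrightarrow> f \<in> borel_measurable M \<Longrightarrow> a < \<infinity> \<Longrightarrow> \<rho> (\<lambda>x. a * f x) = a * \<rho> f"
  unfolding banach_function_norm_def by auto

lemma banach_function_norm_add:
  "banach_function_norm M \<rho> \<Longrightarrow> f \<in> borel_measurable M \<Longrightarrow> g \<in> borel_measurable M
    \<Longrightarrow> \<rho> (\<lambda>x. f x + g x) \<le> \<rho> f + \<rho> g"
  unfolding banach_function_norm_def by auto

lemma banach_function_norm_indicator_finite:
  "banach_function_norm M \<rho> \<Longrightarrow> E \<in> sets M \<Longrightarrow> emeasure M E < \<infinity> \<Longrightarrow> \<rho> (indicator E) < \<infinity>"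
  unfolding banach_function_norm_def by auto

lemma banach_function_norm_null_indicator:
  assumes "banach_function_norm M \<rho>" and E: "E \<in> null_sets M"
  shows "\<rho> (indicator E) = 0"
proof -
  have "AE x in M. (indicator E x :: ennreal) = 0"
    using AE_not_in[OF E] by eventually_elim simp
  then show ?thesis
    using assms unfolding banach_function_norm_def by auto
qed

lemma (in finite_measure) banach_function_norm_indicator_le_of_measure_eq:
  assumes \<rho>: "banach_function_norm M \<rho>" and E: "E \<in> sets M" and U: "U \<in> sets M" "U \<subseteq> E"
    and "measure M U = measure M E"
  shows "\<rho> (indicator E) \<le> \<rho> (indicator U)"
proof -
  have "E - U \<in> null_sets M"
    using finite_measure_Diff[OF E U] assms by (simp add: null_sets_def emeasure_eq_measure)
  then have "AE x in M. indicator E x \<le> (indicator U x :: ennreal)"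
    by (rule AE_not_in[THEN eventually_mono]) (auto split: split_indicator)
  then show ?thesis
    using E U by (intro banach_function_norm_mono_AE[OF \<rho>]) auto
qed

lemma banach_function_norm_sum:
  assumes \<rho>: "banach_function_norm M \<rho>" and "finite K" and "\<And>k. k \<in> K \<Longrightarrow> f k \<in> borel_measurable M"
  shows "\<rho> (\<lambda>x. \<Sum>k\<in>K. f k x) \<le> (\<Sum>k\<in>K. \<rho> (f k))"
  using assms(2,3)
proof (induction K rule: finite_induct)
  case empty
  then show ?case using banach_function_norm_zero[OF \<rho>] by simp
next
  case (insert k K)
  have "\<rho> (\<lambda>x. \<Sum>k\<in>insert k K. f k x) = \<rho> (\<lambda>x. f k x + (\<Sum>k\<in>K. f k x))"
    using insert by simp
  also have "\<dots> \<le> \<rho> (f k) + \<rho> (\<lambda>x. \<Sum>k\<in>K. f k x)"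
    using insert by (intro banach_function_norm_add[OF \<rho>]) auto
  also have "\<dots> \<le> \<rho> (f k) + (\<Sum>k\<in>K. \<rho> (f k))"
    using insert by (intro add_left_mono) auto
  finally show ?case using insert by simp
qed

lemma ri_norm_banach_function_norm: "ri_norm M \<rho> \<Longrightarrow> banach_function_norm M \<rho>"
  unfolding ri_norm_def by auto

lemma ri_norm_equimeasurable:
  assumes "ri_norm M \<rho>" "f \<in> borel_measurable M" "g \<in> borel_measurable M"
    and "\<And>t. emeasure M {x\<in>space M. t < f x} = emeasure M {x\<in>space M. t < g x}"
  shows "\<rho> f = \<rho> g"
  using assms unfolding ri_norm_def by blast

lemma ri_norm_step_function_permute:
  fixes a :: "'i \<Rightarrow> ennreal"
  assumes ri: "ri_norm M \<rho>" and I: "finite I" and disj: "disjoint_family_on P I"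
    and P: "\<And>i. i \<in> I \<Longrightarrow> P i \<in> sets M" "\<And>i. i \<in> I \<Longrightarrow> emeasure M (P i) = c"
    and \<sigma>: "bij_betw \<sigma> I I"
  shows "\<rho> (\<lambda>x. \<Sum>i\<in>I. a (\<sigma> i) * indicator (P i) x) = \<rho> (\<lambda>x. \<Sum>i\<in>I. a i * indicator (P i) x)"
proof -
  have "card {i\<in>I. r < a (\<sigma> i)} = card {i\<in>I. r < a i}" for r
  proof -
    have "\<sigma> ` {i\<in>I. r < a (\<sigma> i)} = {i\<in>I. r < a i}"
      using \<sigma> unfolding bij_betw_def by force
    moreover have "inj_on \<sigma> {i\<in>I. r < a (\<sigma> i)}"
      using \<sigma> unfolding bij_betw_def by (auto intro: inj_on_subset)
    ultimately show ?thesis by (metis card_image)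
  qed
  then show ?thesis
    using P(1) by (intro ri_norm_equimeasurable[OF ri])
      (simp_all only: emeasure_step_function_greater[OF I disj P] borel_measurable_sum
        borel_measurable_times_ennreal borel_measurable_const borel_measurable_indicator)
qed

section \<open>Cutting sets into pieces of equal measure\<close>

lemma (in finite_measure) measure_UN_disjoint_const:
  assumes "finite I" "disjoint_family_on P I" "\<And>i. i \<in> I \<Longrightarrow> P i \<in> sets M" "\<And>i. i \<in> I \<Longrightarrow> measure M (P i) = c"
  shows "measure M (\<Union>i\<in>I. P i) = real (card I) * c"
  using assms by (subst finite_measure_finite_Union) auto

definition equal_pieces :: "'a measure \<Rightarrow> 'a set \<Rightarrow> real \<Rightarrow> nat \<Rightarrow> (nat \<Rightarrow> 'a set) \<Rightarrow> bool" where
  "equal_pieces M A c n Q \<longleftrightarrow>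
     (\<forall>j<n. Q j \<in> sets M \<and> Q j \<subseteq> A \<and> measure M (Q j) = c) \<and> disjoint_family_on Q {..<n}"

definition divisible_into_pieces :: "'a measure \<Rightarrow> real \<Rightarrow> bool" where
  "divisible_into_pieces M c \<longleftrightarrow>
     (\<forall>A\<in>sets M. \<forall>n. real n * c \<le> measure M A \<longrightarrow> (\<exists>Q. equal_pieces M A c n Q))"

lemma equal_pieces_0 [simp]: "equal_pieces M A c 0 Q"
  by (simp add: equal_pieces_def disjoint_family_on_def)

lemma equal_pieces_Suc:
  assumes Q: "equal_pieces M A c n Q" and B: "B \<in> sets M" "B \<subseteq> A - (\<Union>j<n. Q j)" "measure M B = c"
  shows "equal_pieces M A c (Suc n) (Q(n := B))"
proof -
  have "disjoint_family_on (Q(n := B)) {..<Suc n}"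
    unfolding disjoint_family_on_def
  proof (intro ballI impI)
    fix i j assume ij: "i \<in> {..<Suc n}" "j \<in> {..<Suc n}" "i \<noteq> j"
    show "(Q(n := B)) i \<inter> (Q(n := B)) j = {}"
    proof (cases "i = n \<or> j = n")
      case True
      then show ?thesis
        using ij B(2) by auto
    next
      case False
      with ij have "i \<in> {..<n}" "j \<in> {..<n}"
        by auto
      then show ?thesis
        using False ij(3) Q disjoint_family_onD[of Q "{..<n}" i j] unfolding equal_pieces_def by simp
    qed
  qed
  then show ?thesis
    using Q B unfolding equal_pieces_def by (auto simp: less_Suc_eq)
qed

lemma equal_pieces_mono: "equal_pieces M A c n Q \<Longrightarrow> A \<subseteq> A' \<Longrightarrow> equal_pieces M A' c n Q"
  unfolding equal_pieces_def by blast

lemma equal_pieces_le: "equal_pieces M A c n Q \<Longrightarrow> m \<le> n \<Longrightarrow> equal_pieces M A c m Q"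
  unfolding equal_pieces_def by (auto intro: disjoint_family_on_mono)

lemma (in finite_measure) measure_UN_equal_pieces:
  "equal_pieces M A c n Q \<Longrightarrow> measure M (\<Union>j<n. Q j) = real n * c"
  unfolding equal_pieces_def by (subst measure_UN_disjoint_const) auto

lemma (in finite_measure) nonatomic_half_subset:
  assumes na: "nonatomic_measure M" and B: "B \<in> sets M" "0 < measure M B"
  obtains C where "C \<in> sets M" "C \<subseteq> B" "0 < measure M C" "measure M C \<le> measure M B / 2"
proof -
  obtain C where C: "C \<in> sets M" "C \<subseteq> B" "0 < emeasure M C" "emeasure M C < emeasure M B"
    using na B unfolding nonatomic_measure_def by (auto simp: emeasure_eq_measure)
  then have "0 < measure M C" "measure M C < measure M B"
    by (simp_all add: emeasure_eq_measure ennreal_less_iff)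
  moreover have "measure M (B - C) = measure M B - measure M C"
    using B C by (simp add: finite_measure_Diff)
  ultimately show ?thesis
    using that[of C] that[of "B - C"] B C by (cases "measure M C \<le> measure M B / 2") auto
qed

lemma (in finite_measure) nonatomic_small_subset:
  assumes na: "nonatomic_measure M" and A: "A \<in> sets M" "0 < measure M A" and e: "0 < e"
  obtains B where "B \<in> sets M" "B \<subseteq> A" "0 < measure M B" "measure M B < e"
proof -
  have halving: "\<exists>B\<in>sets M. B \<subseteq> A \<and> 0 < measure M B \<and> measure M B \<le> measure M A / 2 ^ n" for n
  proof (induction n)
    case 0
    then show ?case
      using A by auto
  next
    case (Suc n)
    then obtain B where B: "B \<in> sets M" "B \<subseteq> A" "0 < measure M B" "measure M B \<le> measure M A / 2 ^ n"
      by blast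
    obtain C where "C \<in> sets M" "C \<subseteq> B" "0 < measure M C" "measure M C \<le> measure M B / 2"
      using nonatomic_half_subset[OF na B(1,3)] .
    with B show ?case
      by (intro bexI[of _ C]) auto
  qed
  obtain n :: nat where "measure M A / e < 2 ^ n"
    using real_arch_pow[of 2 "measure M A / e"] by auto
  then have "measure M A / 2 ^ n < e"
    using e by (simp add: field_simps)
  with halving[of n] show ?thesis
    using that by force
qed

lemma (in finite_measure) near_maximal_subset:
  assumes "0 \<le> r"
  obtains C where "C \<in> sets M" "C \<subseteq> S" "measure M C \<le> r"
    "\<And>D. D \<in> sets M \<Longrightarrow> D \<subseteq> S \<Longrightarrow> measure M D \<le> r \<Longrightarrow> measure M D \<le> 2 * measure M C"
proof -
  define cand where "cand = {D \<in> sets M. D \<subseteq> S \<and> measure M D \<le> r}"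
  have empty: "{} \<in> cand"
    using assms unfolding cand_def by auto
  have bdd: "bdd_above (measure M ` cand)"
    unfolding cand_def by (intro bdd_aboveI[of _ r]) auto
  have upper: "measure M D \<le> Sup (measure M ` cand)" if "D \<in> cand" for D
    using that bdd by (intro cSup_upper) auto
  show ?thesis
  proof (cases "Sup (measure M ` cand) \<le> 0")
    case True
    then show ?thesis
      using that[of "{}"] upper assms unfolding cand_def by fastforce
  next
    case False
    then obtain C where "C \<in> cand" "Sup (measure M ` cand) / 2 < measure M C"
      using less_cSup_iff[OF _ bdd, of "Sup (measure M ` cand) / 2"] empty by auto
    then show ?thesis
      using that[of C] upper unfolding cand_def by fastforce
  qed
qed

lemma (in finite_measure) greedy_subset_sequence:
  assumes m: "0 \<le> m"
  obtains B where "incseq B" "\<And>n. B n \<in> sets M" "\<And>n. B n \<subseteq> A" "\<And>n. measure M (B n) \<le> m"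
    "\<And>n D. D \<in> sets M \<Longrightarrow> D \<subseteq> A - B n \<Longrightarrow> measure M (B n) + measure M D \<le> m
      \<Longrightarrow> measure M D \<le> 2 * (measure M (B (Suc n)) - measure M (B n))"
proof -
  define good where "good S C \<longleftrightarrow> C \<in> sets M \<and> C \<subseteq> A - S \<and> measure M S + measure M C \<le> m \<and>
    (\<forall>D\<in>sets M. D \<subseteq> A - S \<longrightarrow> measure M S + measure M D \<le> m \<longrightarrow> measure M D \<le> 2 * measure M C)"
    for S C
  have good_step: "good S (SOME C. good S C)" if "measure M S \<le> m" for S
  proof (rule someI_ex)
    from that have "0 \<le> m - measure M S"
      by simp
    then obtain C where "C \<in> sets M" "C \<subseteq> A - S" "measure M C \<le> m - measure M S"
      "\<And>D. D \<in> sets M \<Longrightarrow> D \<subseteq> A - S \<Longrightarrow> measure M D \<le> m - measure M S \<Longrightarrow> measure M D \<le> 2 * measure M C"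
      using near_maximal_subset[where S = "A - S"] by blast
    then show "\<exists>C. good S C"
      unfolding good_def by (intro exI[of _ C]) auto
  qed
  define B where "B n = ((\<lambda>S. S \<union> (SOME C. good S C)) ^^ n) {}" for n
  have B_Suc: "B (Suc n) = B n \<union> (SOME C. good (B n) C)" for n
    by (simp add: B_def)
  have B: "B n \<in> sets M \<and> B n \<subseteq> A \<and> measure M (B n) \<le> m" for n
  proof (induction n)
    case 0
    then show ?case
      using m by (simp add: B_def)
  next
    case (Suc n)
    then have "measure M (B (Suc n)) = measure M (B n) + measure M (SOME C. good (B n) C)"
      unfolding B_Suc using good_step[of "B n"] unfolding good_def by (intro finite_measure_Union) auto
    then show ?case
      unfolding B_Suc using Suc good_step[of "B n"] unfolding good_def by auto
  qed
  have grow: "measure M (B (Suc n)) - measure M (B n) = measure M (SOME C. good (B n) C)" for n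
    unfolding B_Suc using B[of n] good_step[of "B n"] unfolding good_def
    by (subst finite_measure_Union) auto
  show ?thesis
  proof (rule that)
    show "incseq B"
      by (rule incseq_SucI) (simp add: B_Suc)
    show "measure M D \<le> 2 * (measure M (B (Suc n)) - measure M (B n))"
      if "D \<in> sets M" "D \<subseteq> A - B n" "measure M (B n) + measure M D \<le> m" for n D
      using that B[of n] good_step[of "B n"] unfolding grow good_def by blast
  qed (use B in auto)
qed

lemma (in finite_measure) nonatomic_subset_measure_eq:
  assumes na: "nonatomic_measure M" and A: "A \<in> sets M" and m: "0 \<le> m" "m \<le> measure M A"
  obtains S where "S \<in> sets M" "S \<subseteq> A" "measure M S = m"
proof -
  obtain B where B: "incseq B" "\<And>n. B n \<in> sets M" "\<And>n. B n \<subseteq> A" "\<And>n. measure M (B n) \<le> m"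
    and greedy: "\<And>n D. D \<in> sets M \<Longrightarrow> D \<subseteq> A - B n \<Longrightarrow> measure M (B n) + measure M D \<le> m
      \<Longrightarrow> measure M D \<le> 2 * (measure M (B (Suc n)) - measure M (B n))"
    using greedy_subset_sequence[OF m(1)] by blast
  define S where "S = (\<Union>n. B n)"
  have S: "S \<in> sets M" "S \<subseteq> A" and B_S: "\<And>n. B n \<subseteq> S"
    unfolding S_def using B by auto
  have "(\<lambda>n. measure M (B n)) \<longlonglongrightarrow> measure M S"
    unfolding S_def using B by (intro finite_Lim_measure_incseq) auto
  then have S_le: "measure M S \<le> m"
    using B(4) by (intro LIMSEQ_le_const2) auto
  have "measure M S = m"
  proof (rule ccontr)
    assume "measure M S \<noteq> m"
    with S_le have "0 < measure M (A - S)"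
      using A S m by (simp add: finite_measure_Diff)
    then obtain D where D: "D \<in> sets M" "D \<subseteq> A - S" "0 < measure M D" "measure M D < m - measure M S"
      using nonatomic_small_subset[OF na _ _, of "A - S" "m - measure M S"] A S S_le \<open>measure M S \<noteq> m\<close>
      by auto
    have B_le_S: "measure M (B n) \<le> measure M S" for n
      using finite_measure_mono[OF B_S S(1)] .
    have increment: "measure M D \<le> 2 * (measure M (B (Suc n)) - measure M (B n))" for n
      using D B_S[of n] B_le_S[of n] by (intro greedy) auto
    have "real n * (measure M D / 2) \<le> measure M (B n)" for n
    proof (induction n)
      case (Suc n)
      then show ?case
        using increment[of n] by (simp add: algebra_simps)
    qed simp
    moreover obtain n where "m < real n * (measure M D / 2)"
      using reals_Archimedean3[of "measure M D / 2"] D by auto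
    ultimately show False
      using B(4) by (meson not_le order_trans)
  qed
  with S that show ?thesis
    by blast
qed

lemma (in finite_measure) nonatomic_divisible_into_pieces:
  assumes na: "nonatomic_measure M" and c: "0 \<le> c"
  shows "divisible_into_pieces M c"
  unfolding divisible_into_pieces_def
proof (intro ballI allI impI)
  fix A n assume A: "A \<in> sets M"
  show "real n * c \<le> measure M A \<Longrightarrow> \<exists>Q. equal_pieces M A c n Q"
  proof (induction n)
    case 0
    then show ?case
      by auto
  next
    case (Suc n)
    then obtain Q where Q: "equal_pieces M A c n Q"
      using c by (auto simp: algebra_simps)
    have Q_sets: "(\<Union>j<n. Q j) \<in> sets M" "(\<Union>j<n. Q j) \<subseteq> A"
      using Q unfolding equal_pieces_def by auto
    have "measure M (A - (\<Union>j<n. Q j)) = measure M A - real n * c"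
      using finite_measure_Diff[OF A Q_sets] measure_UN_equal_pieces[OF Q] by simp
    moreover have "real (Suc n) * c = real n * c + c"
      by (simp add: algebra_simps)
    ultimately have "c \<le> measure M (A - (\<Union>j<n. Q j))"
      using Suc.prems by linarith
    moreover have "A - (\<Union>j<n. Q j) \<in> sets M"
      using A Q_sets by blast
    ultimately obtain B where "B \<in> sets M" "B \<subseteq> A - (\<Union>j<n. Q j)" "measure M B = c"
      using nonatomic_subset_measure_eq[OF na _ c] by metis
    then show ?case
      using equal_pieces_Suc[OF Q] by blast
  qed
qed

lemma (in finite_measure) completely_atomic_equal_pieces:
  assumes ca: "completely_atomic_equal M" and A0: "is_atom M A0"
    and A: "A \<in> sets M" "measure M A \<le> real n * measure M A0"
  shows "\<exists>k Q. measure M A = real k * measure M A0 \<and> equal_pieces M A (measure M A0) k Q"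
  using A
proof (induction n arbitrary: A)
  case 0
  then have "measure M A = 0"
    using measure_nonneg[of M A] by simp
  then show ?case
    by (intro exI[of _ 0] exI[of _ "\<lambda>_. {}"]) simp
next
  case (Suc n)
  show ?case
  proof (cases "measure M A = 0")
    case True
    then show ?thesis
      by (intro exI[of _ 0] exI[of _ "\<lambda>_. {}"]) simp
  next
    case False
    then have "0 < measure M A"
      using measure_nonneg[of M A] by linarith
    then have "0 < emeasure M A"
      by (simp add: emeasure_eq_measure)
    then obtain B where B: "is_atom M B" "B \<subseteq> A"
      using ca Suc.prems(1) unfolding completely_atomic_equal_def by blast
    have B': "B \<in> sets M" "measure M B = measure M A0"
      using ca B(1) A0 unfolding completely_atomic_equal_def is_atom_def by (auto simp: emeasure_eq_measure)
    have diff: "measure M (A - B) = measure M A - measure M A0"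
      using Suc.prems(1) B' B(2) by (simp add: finite_measure_Diff)
    with Suc.prems(2) have "measure M (A - B) \<le> real n * measure M A0"
      by (simp add: algebra_simps)
    then obtain k Q where k: "measure M (A - B) = real k * measure M A0"
      and Q: "equal_pieces M (A - B) (measure M A0) k Q"
      using Suc.IH[of "A - B"] Suc.prems(1) B' by auto
    have "equal_pieces M A (measure M A0) (Suc k) (Q(k := B))"
      using Q B B' by (intro equal_pieces_Suc equal_pieces_mono[OF Q]) (auto simp: equal_pieces_def)
    moreover have "measure M A = real (Suc k) * measure M A0"
      using k diff by (simp add: algebra_simps)
    ultimately show ?thesis
      by blast
  qed
qed

lemma (in prob_space) completely_atomic_divisible_into_pieces:
  assumes ca: "completely_atomic_equal M"
  obtains a where "0 < a" "\<And>A. A \<in> sets M \<Longrightarrow> \<exists>k. measure M A = real k * a" "divisible_into_pieces M a"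
proof -
  obtain A0 where A0: "is_atom M A0"
    using ca emeasure_space_1 unfolding completely_atomic_equal_def by force
  define a where "a = measure M A0"
  have a: "0 < a"
    using A0 unfolding is_atom_def a_def by (simp add: emeasure_eq_measure)
  have pieces: "\<exists>k Q. measure M A = real k * a \<and> equal_pieces M A a k Q" if A: "A \<in> sets M" for A
  proof -
    obtain n where "1 < real n * a"
      using reals_Archimedean3[OF a] by blast
    then have "measure M A \<le> real n * a"
      using prob_le_1[of A] by linarith
    then show ?thesis
      unfolding a_def by (rule completely_atomic_equal_pieces[OF ca A0 A])
  qed
  show ?thesis
  proof (rule that[OF a])
    show "\<exists>k. measure M A = real k * a" if "A \<in> sets M" for A
      using pieces[OF that] by blast
    show "divisible_into_pieces M a"
      unfolding divisible_into_pieces_def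
    proof (intro ballI allI impI)
      fix A n assume A: "A \<in> sets M" and n: "real n * a \<le> measure M A"
      obtain k Q where k: "measure M A = real k * a" and Q: "equal_pieces M A a k Q"
        using pieces[OF A] by blast
      from n have "n \<le> k"
        unfolding k using a by (simp add: mult_le_cancel_right_pos)
      then show "\<exists>Q. equal_pieces M A a n Q"
        using equal_pieces_le[OF Q] by blast
    qed
  qed
qed

section \<open>Averaging over cyclic shifts\<close>

lemma ri_norm_cyclic_average:
  fixes a :: "nat \<Rightarrow> ennreal"
  assumes ri: "ri_norm M \<rho>" and N: "0 < N" and disj: "disjoint_family_on P {..<N}"
    and P: "\<And>j. j < N \<Longrightarrow> P j \<in> sets M" "\<And>j. j < N \<Longrightarrow> emeasure M (P j) = c"
    and a: "\<And>j. j < N \<Longrightarrow> a j < \<infinity>"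
  shows "(\<Sum>j<N. a j) * \<rho> (indicator (\<Union>j<N. P j))
    \<le> of_nat N * \<rho> (\<lambda>x. \<Sum>j<N. a j * indicator (P j) x)"
proof -
  have \<rho>: "banach_function_norm M \<rho>"
    using ri by (rule ri_norm_banach_function_norm)
  define shift where "shift k x = (\<Sum>j<N. a ((j + k) mod N) * indicator (P j) x)" for k x
  have shift_measurable: "shift k \<in> borel_measurable M" for k
    unfolding shift_def using P(1) by (intro borel_measurable_sum) auto
  have shift_0: "shift 0 = (\<lambda>x. \<Sum>j<N. a j * indicator (P j) x)"
    unfolding shift_def by (intro ext sum.cong) auto
  have norm_shift: "\<rho> (shift k) = \<rho> (shift 0)" for k
    unfolding shift_0 unfolding shift_def
    using P by (intro ri_norm_step_function_permute[OF ri _ disj _ _ bij_betw_add_mod[OF N]]) auto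
  have cyclic_sum: "(\<Sum>k<N. a ((j + k) mod N)) = (\<Sum>k<N. a k)" for j
    using sum.reindex_bij_betw[OF bij_betw_add_mod[OF N, of j], of a] by (simp add: add.commute)
  have sum_shift: "(\<Sum>k<N. shift k x) = (\<Sum>j<N. a j) * indicator (\<Union>j<N. P j) x" for x
  proof -
    have "(\<Sum>k<N. shift k x) = (\<Sum>j<N. \<Sum>k<N. a ((j + k) mod N) * indicator (P j) x)"
      unfolding shift_def by (rule sum.swap)
    also have "\<dots> = (\<Sum>j<N. (\<Sum>k<N. a k) * indicator (P j) x)"
      by (simp only: sum_distrib_right[symmetric] cyclic_sum)
    also have "\<dots> = (\<Sum>j<N. a j) * indicator (\<Union>j<N. P j) x"
      by (simp add: sum_distrib_left indicator_UN_disjoint[OF _ disj])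
    finally show ?thesis .
  qed
  have "(\<Sum>j<N. a j) < \<infinity>"
    using a by (simp add: sum_Pinfty less_top)
  then have "(\<Sum>j<N. a j) * \<rho> (indicator (\<Union>j<N. P j)) = \<rho> (\<lambda>x. \<Sum>k<N. shift k x)"
    unfolding sum_shift using P(1)
    by (intro banach_function_norm_cmult[OF \<rho>, symmetric] borel_measurable_indicator) blast
  also have "\<dots> \<le> (\<Sum>k<N. \<rho> (shift k))"
    using banach_function_norm_sum[OF \<rho> finite_lessThan, where f = shift] shift_measurable by blast
  also have "\<dots> = (\<Sum>k<N. \<rho> (shift 0))"
    by (rule sum.cong[OF refl norm_shift])
  also have "\<dots> = of_nat N * \<rho> (shift 0)"
    by simp
  finally show ?thesis
    unfolding shift_0 .
qed

lemma ri_norm_average_finite: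
  fixes a :: "'i \<Rightarrow> ennreal"
  assumes ri: "ri_norm M \<rho>" and I: "finite I" "I \<noteq> {}" and disj: "disjoint_family_on P I"
    and P: "\<And>i. i \<in> I \<Longrightarrow> P i \<in> sets M" "\<And>i. i \<in> I \<Longrightarrow> emeasure M (P i) = c"
    and a: "\<And>i. i \<in> I \<Longrightarrow> a i < \<infinity>"
  shows "(\<Sum>i\<in>I. a i) * \<rho> (indicator (\<Union>i\<in>I. P i))
    \<le> of_nat (card I) * \<rho> (\<lambda>x. \<Sum>i\<in>I. a i * indicator (P i) x)"
proof -
  obtain h where h: "bij_betw h {..<card I} I"
    using ex_bij_betw_nat_finite[OF I(1)] by (auto simp: atLeast0LessThan)
  then have h_in: "h j \<in> I" if "j < card I" for j
    using that bij_betwE by blast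
  have "disjoint_family_on (\<lambda>j. P (h j)) {..<card I}"
    unfolding disjoint_family_on_def
  proof (intro ballI impI)
    fix i j assume "i \<in> {..<card I}" "j \<in> {..<card I}" "i \<noteq> j"
    then have "h i \<in> I" "h j \<in> I" "h i \<noteq> h j"
      using h h_in unfolding bij_betw_def inj_on_def by auto
    then show "P (h i) \<inter> P (h j) = {}"
      by (rule disjoint_family_onD[OF disj])
  qed
  then have "(\<Sum>j<card I. a (h j)) * \<rho> (indicator (\<Union>j<card I. P (h j)))
      \<le> of_nat (card I) * \<rho> (\<lambda>x. \<Sum>j<card I. a (h j) * indicator (P (h j)) x)"
    using I P a h_in by (intro ri_norm_cyclic_average[OF ri]) auto
  moreover have "(\<Sum>j<card I. a (h j)) = (\<Sum>i\<in>I. a i)"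
    by (rule sum.reindex_bij_betw[OF h])
  moreover have "(\<Union>j<card I. P (h j)) = (\<Union>i\<in>I. P i)"
    using bij_betw_imp_surj_on[OF h] by (metis image_image)
  moreover have "(\<lambda>x. \<Sum>j<card I. a (h j) * indicator (P (h j)) x) = (\<lambda>x. \<Sum>i\<in>I. a i * indicator (P i) x)"
    by (intro ext sum.reindex_bij_betw[OF h])
  ultimately show ?thesis
    by simp
qed

lemma (in finite_measure) divisible_into_pieces_remainder:
  assumes div: "divisible_into_pieces M c" and c: "0 < c" and E: "E \<in> sets M" "measure M E = real N * c"
    and I: "finite I" and disj: "disjoint_family_on P I"
    and P: "\<And>i. i \<in> I \<Longrightarrow> P i \<in> sets M \<and> P i \<subseteq> E \<and> measure M (P i) = c"
  shows "card I \<le> N" "\<exists>Z. equal_pieces M (E - (\<Union>i\<in>I. P i)) c (N - card I) Z"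
proof -
  define W where "W = (\<Union>i\<in>I. P i)"
  have W: "W \<in> sets M" "W \<subseteq> E"
    using P I unfolding W_def by auto
  have measure_W: "measure M W = real (card I) * c"
    unfolding W_def using I disj P by (intro measure_UN_disjoint_const) auto
  with E c show "card I \<le> N"
    using finite_measure_mono[OF W(2) E(1)] by (simp add: mult_le_cancel_right_pos)
  then have "real (N - card I) * c \<le> measure M (E - W)"
    using finite_measure_Diff[OF E(1) W(1,2)] measure_W E(2) by (simp add: algebra_simps)
  then show "\<exists>Z. equal_pieces M (E - (\<Union>i\<in>I. P i)) c (N - card I) Z"
    using div E(1) W(1) unfolding divisible_into_pieces_def W_def by blast
qed

lemma ri_norm_average_pieces:
  fixes a :: "'i \<Rightarrow> ennreal"
  assumes fm: "finite_measure M" and ri: "ri_norm M \<rho>" and div: "divisible_into_pieces M c" and c: "0 < c"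
    and E: "E \<in> sets M" "measure M E = real N * c" "0 < N"
    and I: "finite I" and disj: "disjoint_family_on P I"
    and P: "\<And>i. i \<in> I \<Longrightarrow> P i \<in> sets M \<and> P i \<subseteq> E \<and> measure M (P i) = c"
    and a: "\<And>i. i \<in> I \<Longrightarrow> a i < \<infinity>"
  shows "(\<Sum>i\<in>I. a i) * \<rho> (indicator E) \<le> of_nat N * \<rho> (\<lambda>x. \<Sum>i\<in>I. a i * indicator (P i) x)"
proof -
  interpret finite_measure M
    by (rule fm)
  obtain Z where Z: "equal_pieces M (E - (\<Union>i\<in>I. P i)) c (N - card I) Z" and "card I \<le> N"
    using divisible_into_pieces_remainder[OF div c E(1,2) I disj P] by blast
  \<comment> \<open>Padding with zero coefficients on pieces of the remainder makes the family cover E up to a null set.\<close>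
  define J where "J = I <+> {..<N - card I}"
  define P' where "P' = case_sum P Z"
  define a' :: "'i + nat \<Rightarrow> ennreal" where "a' = case_sum a (\<lambda>_. 0)"
  have J: "finite J" "card J = N" "J \<noteq> {}"
    using I \<open>card I \<le> N\<close> E(3) unfolding J_def by (auto simp: card_Plus)
  have disj': "disjoint_family_on P' J"
    unfolding P'_def J_def using Z by (intro disjoint_family_on_Plus[OF disj]) (auto simp: equal_pieces_def)
  have P': "P' j \<in> sets M \<and> P' j \<subseteq> E \<and> measure M (P' j) = c" if "j \<in> J" for j
    using that P Z unfolding J_def P'_def equal_pieces_def by (cases j) (auto, blast)
  define U where "U = (\<Union>j\<in>J. P' j)"
  have U: "U \<in> sets M" "U \<subseteq> E" "measure M U = measure M E"
    unfolding U_def using P' J measure_UN_disjoint_const[OF J(1) disj'] E(2) by auto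
  have "(\<Sum>j\<in>J. a' j) = (\<Sum>i\<in>I. a i)"
    unfolding J_def a'_def using I by (simp add: sum.Plus)
  then have "(\<Sum>i\<in>I. a i) * \<rho> (indicator E) \<le> (\<Sum>j\<in>J. a' j) * \<rho> (indicator U)"
    using banach_function_norm_indicator_le_of_measure_eq[OF ri_norm_banach_function_norm[OF ri] E(1) U]
    by (simp add: mult_left_mono)
  also have "\<dots> \<le> of_nat N * \<rho> (\<lambda>x. \<Sum>j\<in>J. a' j * indicator (P' j) x)"
    unfolding U_def J(2)[symmetric] using P' a
    by (intro ri_norm_average_finite[OF ri J(1,3) disj']) (auto simp: emeasure_eq_measure J_def a'_def)
  also have "(\<lambda>x. \<Sum>j\<in>J. a' j * indicator (P' j) x) = (\<lambda>x. \<Sum>i\<in>I. a i * indicator (P i) x)"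
    unfolding J_def a'_def P'_def
    by (simp only: sum.Plus[OF I finite_lessThan] comp_def sum.case mult_zero_left sum.neutral_const add_0_right)
  finally show ?thesis .
qed

lemma (in finite_measure) level_set_pieces:
  assumes div: "divisible_into_pieces M c" and u: "simple_function M u"
    and n: "\<And>v. real (n v) * c \<le> measure M {x\<in>space M. u x = v}"
  shows "\<exists>P. disjoint_family_on P (SIGMA v:V. {..<n v}) \<and> (\<forall>v j. j < n v \<longrightarrow>
    P (v, j) \<in> sets M \<and> P (v, j) \<subseteq> {x\<in>space M. u x = v} \<and> measure M (P (v, j)) = c)"
proof -
  have "\<forall>v. \<exists>Q. equal_pieces M {x\<in>space M. u x = v} c (n v) Q"
    using div simple_function_level_set[OF u] n unfolding divisible_into_pieces_def by blast
  then obtain Q where Q: "\<And>v. equal_pieces M {x\<in>space M. u x = v} c (n v) (Q v)"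
    by metis
  then have Q_piece: "Q v j \<in> sets M \<and> Q v j \<subseteq> {x\<in>space M. u x = v} \<and> measure M (Q v j) = c"
    if "j < n v" for v j
    using that unfolding equal_pieces_def by blast
  from Q have Q_disj: "disjoint_family_on (Q v) {..<n v}" for v
    unfolding equal_pieces_def by blast
  have "disjoint_family_on (\<lambda>v. {x\<in>space M. u x = v}) V"
    by (auto simp: disjoint_family_on_def)
  then have "disjoint_family_on (\<lambda>(v, j). Q v j) (SIGMA v:V. {..<n v})"
    by (rule disjoint_family_on_Sigma[OF _ Q_disj]) (use Q_piece in auto)
  with Q_piece show ?thesis
    by (intro exI[of _ "\<lambda>(v, j). Q v j"]) auto
qed

lemma sum_fst_Sigma_lessThan:
  fixes V :: "'a::comm_semiring_1 set"
  assumes "finite V"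
  shows "(\<Sum>i\<in>(SIGMA v:V. {..<n v}). fst i) = (\<Sum>v\<in>V. of_nat (n v) * v)"
proof -
  have "(\<Sum>v\<in>V. of_nat (n v) * v) = (\<Sum>v\<in>V. \<Sum>j<n v. v)"
    by simp
  also have "\<dots> = (\<Sum>(v, j)\<in>(SIGMA v:V. {..<n v}). v)"
    using assms by (intro sum.Sigma) auto
  finally show ?thesis
    by (simp add: split_def)
qed

lemma ri_norm_simple_function_pieces:
  assumes fm: "finite_measure M" and ri: "ri_norm M \<rho>" and div: "divisible_into_pieces M c" and c: "0 < c"
    and E: "E \<in> sets M" "measure M E = real N * c" "0 < N"
    and u: "simple_function M u" "\<And>x. u x < \<infinity>" "\<And>x. x \<in> space M \<Longrightarrow> x \<notin> E \<Longrightarrow> u x = 0"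
    and n: "\<And>v. real (n v) * c \<le> measure M {x\<in>space M. u x = v}"
  shows "(\<Sum>v\<in>u ` space M - {0}. v * ennreal (c * real (n v))) * \<rho> (indicator E) \<le> emeasure M E * \<rho> u"
proof -
  interpret finite_measure M
    by (rule fm)
  define V where "V = u ` space M - {0}"
  define I where "I = (SIGMA v:V. {..<n v})"
  obtain P where disj: "disjoint_family_on P I" and P: "\<And>v j. j < n v \<Longrightarrow>
      P (v, j) \<in> sets M \<and> P (v, j) \<subseteq> {x\<in>space M. u x = v} \<and> measure M (P (v, j)) = c"
    using level_set_pieces[OF div u(1) n, where V = V] unfolding I_def by blast
  have V: "finite V" and I: "finite I"
    using u(1) unfolding I_def V_def simple_function_def by auto
  have P_E: "P i \<subseteq> E" if "i \<in> I" for i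
    using that P[of "snd i" "fst i"] u(3) unfolding I_def V_def by force
  have step_le_u: "(\<Sum>i\<in>I. fst i * indicator (P i) x) \<le> u x" if "x \<in> space M" for x
  proof (cases "\<exists>i\<in>I. x \<in> P i")
    case True
    then obtain i where i: "i \<in> I" "x \<in> P i"
      by blast
    then have "u x = fst i"
      using P[of "snd i" "fst i"] unfolding I_def by auto
    then show ?thesis
      using sum_indicator_disjoint_family[OF disj i(2) I i(1), of fst] by simp
  qed (auto intro: sum.neutral)
  have "(\<Sum>i\<in>I. fst i) * \<rho> (indicator E) \<le> of_nat N * \<rho> (\<lambda>x. \<Sum>i\<in>I. fst i * indicator (P i) x)"
    using P P_E u(2) unfolding I_def V_def
    by (intro ri_norm_average_pieces[OF fm ri div c E I[unfolded I_def V_def] disj[unfolded I_def V_def]]) auto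
  also have "\<dots> \<le> of_nat N * \<rho> u"
    using step_le_u P u(1) unfolding I_def
    by (intro mult_left_mono banach_function_norm_mono[OF ri_norm_banach_function_norm[OF ri]]
        borel_measurable_simple_function borel_measurable_sum) auto
  finally have average: "(\<Sum>v\<in>V. of_nat (n v) * v) * \<rho> (indicator E) \<le> of_nat N * \<rho> u"
    unfolding I_def sum_fst_Sigma_lessThan[OF V] .
  have "(\<Sum>v\<in>V. v * ennreal (c * real (n v))) * \<rho> (indicator E)
      = ennreal c * ((\<Sum>v\<in>V. of_nat (n v) * v) * \<rho> (indicator E))"
    using c by (simp add: sum_distrib_left ennreal_mult ennreal_of_nat_eq_real_of_nat mult_ac)
  also have "\<dots> \<le> ennreal c * (of_nat N * \<rho> u)"
    using average by (rule mult_left_mono) simp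
  also have "\<dots> = emeasure M E * \<rho> u"
    using E(2) c by (simp add: emeasure_eq_measure ennreal_mult ennreal_of_nat_eq_real_of_nat mult_ac)
  finally show ?thesis
    unfolding V_def .
qed

lemma (in finite_measure) nn_integral_simple_function_le_rounded:
  assumes u: "simple_function M u" and c: "0 < c"
  shows "integral\<^sup>N M u \<le> (\<Sum>v\<in>u ` space M - {0}. v * ennreal (c * real (nat \<lfloor>measure M {x\<in>space M. u x = v} / c\<rfloor>)))
    + ennreal c * (\<Sum>v\<in>u ` space M - {0}. v)"
proof -
  define A where "A v = {x\<in>space M. u x = v}" for v
  define n where "n v = nat \<lfloor>measure M (A v) / c\<rfloor>" for v
  have round: "measure M (A v) \<le> c * real (n v) + c" for v
  proof -
    have "measure M (A v) / c \<le> real (n v) + 1"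
      using c measure_nonneg[of M "A v"] unfolding n_def by linarith
    then show ?thesis
      using c by (simp add: divide_le_eq algebra_simps)
  qed
  have "integral\<^sup>N M u = (\<Sum>v\<in>u ` space M - {0}. v * ennreal (measure M (A v)))"
    unfolding A_def by (rule nn_integral_simple_function_level_sets[OF u])
  also have "\<dots> \<le> (\<Sum>v\<in>u ` space M - {0}. v * ennreal (c * real (n v) + c))"
    by (intro sum_mono mult_left_mono ennreal_leI round) simp
  also have "\<dots> = (\<Sum>v\<in>u ` space M - {0}. v * ennreal (c * real (n v))) + ennreal c * (\<Sum>v\<in>u ` space M - {0}. v)"
    using c by (simp add: distrib_left sum.distrib sum_distrib_left mult.commute)
  finally show ?thesis
    unfolding n_def A_def .
qed

lemma (in finite_measure) nonatomic_ri_norm_simple_function_bound: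
  assumes na: "nonatomic_measure M" and ri: "ri_norm M \<rho>" and E: "E \<in> sets M" "0 < measure M E"
    and u: "simple_function M u" "\<And>x. u x < \<infinity>" "\<And>x. x \<in> space M \<Longrightarrow> x \<notin> E \<Longrightarrow> u x = 0"
  shows "integral\<^sup>N M u * \<rho> (indicator E) \<le> emeasure M E * \<rho> u"
proof -
  define V where "V = u ` space M - {0}"
  define K where "K = (\<Sum>v\<in>V. v)"
  have "K < \<infinity>"
    using u(1,2) unfolding K_def V_def simple_function_def by (auto simp: sum_Pinfty less_top)
  moreover have "\<rho> (indicator E) < \<infinity>"
    using ri E(1) by (intro banach_function_norm_indicator_finite ri_norm_banach_function_norm)
      (auto simp: emeasure_eq_measure)
  ultimately have finite: "K * \<rho> (indicator E) < \<infinity>"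
    by (simp add: ennreal_mult_less_top)
  have "integral\<^sup>N M u * \<rho> (indicator E)
      \<le> emeasure M E * \<rho> u + ennreal (measure M E / real N) * (K * \<rho> (indicator E))" if N: "0 < N" for N
  proof -
    define c where "c = measure M E / real N"
    have c: "0 < c" and E_N: "measure M E = real N * c"
      using E(2) N unfolding c_def by auto
    define S where "S = (\<Sum>v\<in>V. v * ennreal (c * real (nat \<lfloor>measure M {x\<in>space M. u x = v} / c\<rfloor>)))"
    have "S * \<rho> (indicator E) \<le> emeasure M E * \<rho> u"
      unfolding S_def V_def using c measure_nonneg
      by (intro ri_norm_simple_function_pieces[OF finite_measure_axioms ri nonatomic_divisible_into_pieces[OF na less_imp_le[OF c]]
            c E(1) E_N N u]) (simp_all add: of_nat_floor pos_le_divide_eq[symmetric])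
    moreover have "integral\<^sup>N M u \<le> S + ennreal c * K"
      unfolding S_def K_def V_def using nn_integral_simple_function_le_rounded[OF u(1) c] .
    then have "integral\<^sup>N M u * \<rho> (indicator E) \<le> S * \<rho> (indicator E) + ennreal c * (K * \<rho> (indicator E))"
      by (metis distrib_right mult.assoc mult_right_mono zero_le)
    ultimately show ?thesis
      unfolding c_def by (meson add_right_mono order_trans)
  qed
  then show ?thesis
    using measure_nonneg finite by (rule ennreal_le_of_le_add_inverse)
qed

lemma (in prob_space) atomic_ri_norm_simple_function_bound:
  assumes ca: "completely_atomic_equal M" and ri: "ri_norm M \<rho>" and E: "E \<in> sets M" "0 < measure M E"
    and u: "simple_function M u" "\<And>x. u x < \<infinity>" "\<And>x. x \<in> space M \<Longrightarrow> x \<notin> E \<Longrightarrow> u x = 0"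
  shows "integral\<^sup>N M u * \<rho> (indicator E) \<le> emeasure M E * \<rho> u"
proof -
  obtain a where a: "0 < a" and multiple: "\<And>A. A \<in> sets M \<Longrightarrow> \<exists>k. measure M A = real k * a"
    and div: "divisible_into_pieces M a"
    using completely_atomic_divisible_into_pieces[OF ca] by metis
  obtain N where N: "measure M E = real N * a"
    using multiple[OF E(1)] by blast
  with E(2) have "0 < N"
    by (cases N) auto
  have "\<forall>v. \<exists>k. measure M {x\<in>space M. u x = v} = real k * a"
    using multiple simple_function_level_set[OF u(1)] by blast
  then obtain n where n: "\<And>v. measure M {x\<in>space M. u x = v} = real (n v) * a"
    by metis
  have "(\<Sum>v\<in>u ` space M - {0}. v * ennreal (a * real (n v))) * \<rho> (indicator E) \<le> emeasure M E * \<rho> u"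
    using ri_norm_simple_function_pieces[OF finite_measure_axioms ri div a E(1) N \<open>0 < N\<close> u, of n] n by simp
  then show ?thesis
    using n by (simp add: nn_integral_simple_function_level_sets[OF u(1)] mult.commute)
qed

lemma ri_norm_simple_function_bound:
  assumes ps: "prob_space M" and cs: "nonatomic_measure M \<or> completely_atomic_equal M"
    and ri: "ri_norm M \<rho>" and E: "E \<in> sets M" "0 < measure M E"
    and u: "simple_function M u" "\<And>x. u x < \<infinity>" "\<And>x. x \<in> space M \<Longrightarrow> x \<notin> E \<Longrightarrow> u x = 0"
  shows "integral\<^sup>N M u * \<rho> (indicator E) \<le> emeasure M E * \<rho> u"
proof -
  interpret prob_space M
    by (rule ps)
  from cs show ?thesis
  proof
    assume "nonatomic_measure M"
    then show ?thesis
      using ri E u by (rule nonatomic_ri_norm_simple_function_bound)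
  next
    assume "completely_atomic_equal M"
    then show ?thesis
      using ri E u by (rule atomic_ri_norm_simple_function_bound)
  qed
qed

lemma ri_norm_nn_integral_indicator_bound:
  assumes ps: "prob_space M" and cs: "nonatomic_measure M \<or> completely_atomic_equal M"
    and ri: "ri_norm M \<rho>" and E: "E \<in> sets M" and g: "g \<in> borel_measurable M"
  shows "(\<integral>\<^sup>+x. g x * indicator E x \<partial>M) * \<rho> (indicator E) \<le> emeasure M E * \<rho> g"
proof -
  interpret prob_space M
    by (rule ps)
  have gE: "(\<lambda>x. g x * indicator E x) \<in> borel_measurable M"
    using g E by simp
  show ?thesis
  proof (cases "measure M E = 0")
    case True
    then have "AE x in M. g x * indicator E x = 0"
      using E by (intro AE_not_in[THEN eventually_mono]) (auto simp: null_sets_def emeasure_eq_measure)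
    then have "(\<integral>\<^sup>+x. g x * indicator E x \<partial>M) = 0"
      by (simp add: nn_integral_0_iff_AE gE)
    then show ?thesis
      by simp
  next
    case False
    then have E_pos: "0 < measure M E"
      using measure_nonneg[of M E] by linarith
    obtain f where f: "\<And>i. simple_function M (f i)" "incseq f" "\<And>i x. f i x < top"
      "\<And>x. (SUP i. f i x) = g x * indicator E x"
      using borel_measurable_implies_simple_function_sequence'[OF gE] by metis
    have f_le: "f i x \<le> g x * indicator E x" for i x
      using SUP_upper[of i UNIV "\<lambda>i. f i x"] f(4) by simp
    have f_zero: "f i x = 0" if "x \<notin> E" for i x
      using f_le[of i x] that by simp
    have "integral\<^sup>N M (f i) * \<rho> (indicator E) \<le> emeasure M E * \<rho> (f i)" for i
      using f(3) f_zero by (intro ri_norm_simple_function_bound[OF ps cs ri E E_pos f(1)]) auto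
    also have "\<rho> (f i) \<le> \<rho> g" for i
    proof (rule banach_function_norm_mono[OF ri_norm_banach_function_norm[OF ri] g borel_measurable_simple_function[OF f(1)]])
      show "f i x \<le> g x" for x
        using f_le[of i x] by (cases "x \<in> E") auto
    qed
    finally have "integral\<^sup>N M (f i) * \<rho> (indicator E) \<le> emeasure M E * \<rho> g" for i
      by (simp add: mult_left_mono)
    moreover have "(\<integral>\<^sup>+x. g x * indicator E x \<partial>M) = (SUP i. integral\<^sup>N M (f i))"
      using f(4)[symmetric]
      by (simp add: nn_integral_monotone_convergence_SUP[OF f(2) borel_measurable_simple_function[OF f(1)]])
    ultimately show ?thesis
      by (simp add: SUP_mult_right_ennreal SUP_least)
  qed
qed

section \<open>Fundamental functions of intersections and sums\<close>

lemma bfs_norm_indicator: "bfs_norm \<rho> (indicator E) = \<rho> (indicator E)"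
proof -
  have "(\<lambda>x. ennreal \<bar>indicator E x :: real\<bar>) = indicator E"
    by (auto split: split_indicator)
  then show ?thesis
    by (simp add: bfs_norm_def)
qed

lemma zero_in_bfs: "banach_function_norm M \<rho> \<Longrightarrow> (\<lambda>x. 0) \<in> bfs M \<rho>"
  by (simp add: bfs_def banach_function_norm_zero)

lemma indicator_in_bfs:
  "banach_function_norm M \<rho> \<Longrightarrow> E \<in> sets M \<Longrightarrow> emeasure M E < \<infinity> \<Longrightarrow> indicator E \<in> bfs M \<rho>"
  using bfs_norm_indicator[of \<rho> E] banach_function_norm_indicator_finite[of M \<rho> E]
  by (simp add: bfs_def bfs_norm_def)

lemma sigma_norm_indicator_le_min:
  assumes \<rho>0: "banach_function_norm M \<rho>0" and \<rho>1: "banach_function_norm M \<rho>1"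
    and E: "E \<in> sets M" "emeasure M E < \<infinity>"
  shows "sigma_norm M \<rho>0 \<rho>1 (indicator E) \<le> min (\<rho>0 (indicator E)) (\<rho>1 (indicator E))"
proof -
  have "sigma_norm M \<rho>0 \<rho>1 (indicator E) \<le> bfs_norm \<rho>0 (indicator E) + bfs_norm \<rho>1 (\<lambda>x. 0)"
    unfolding sigma_norm_def using indicator_in_bfs[OF \<rho>0 E] zero_in_bfs[OF \<rho>1]
    by (intro Inf_lower) force
  moreover have "sigma_norm M \<rho>0 \<rho>1 (indicator E) \<le> bfs_norm \<rho>0 (\<lambda>x. 0) + bfs_norm \<rho>1 (indicator E)"
    unfolding sigma_norm_def using indicator_in_bfs[OF \<rho>1 E] zero_in_bfs[OF \<rho>0]
    by (intro Inf_lower) force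
  ultimately show ?thesis
    unfolding bfs_norm_indicator
    by (simp add: bfs_norm_def banach_function_norm_zero[OF \<rho>0] banach_function_norm_zero[OF \<rho>1])
qed

lemma emeasure_le_nn_integral_abs_split:
  fixes f0 f1 :: "'a \<Rightarrow> real"
  assumes E: "E \<in> sets M" and f: "f0 \<in> borel_measurable M" "f1 \<in> borel_measurable M"
    and split: "\<And>x. x \<in> space M \<Longrightarrow> x \<in> E \<Longrightarrow> f0 x + f1 x = 1"
  shows "emeasure M E \<le> (\<integral>\<^sup>+x. ennreal \<bar>f0 x\<bar> * indicator E x \<partial>M) + (\<integral>\<^sup>+x. ennreal \<bar>f1 x\<bar> * indicator E x \<partial>M)"
proof -
  have "emeasure M E = (\<integral>\<^sup>+x. indicator E x \<partial>M)"
    using E by simp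
  also have "\<dots> \<le> (\<integral>\<^sup>+x. ennreal \<bar>f0 x\<bar> * indicator E x + ennreal \<bar>f1 x\<bar> * indicator E x \<partial>M)"
  proof (intro nn_integral_mono)
    fix x assume x: "x \<in> space M"
    show "indicator E x \<le> ennreal \<bar>f0 x\<bar> * indicator E x + ennreal \<bar>f1 x\<bar> * indicator E x"
    proof (cases "x \<in> E")
      case True
      then have "1 \<le> \<bar>f0 x\<bar> + \<bar>f1 x\<bar>"
        using split[OF x] abs_triangle_ineq[of "f0 x" "f1 x"] by simp
      then have "1 \<le> ennreal \<bar>f0 x\<bar> + ennreal \<bar>f1 x\<bar>"
        by (simp add: ennreal_plus[symmetric] ennreal_leI del: ennreal_plus)
      with True show ?thesis
        by simp
    qed simp
  qed
  also have "\<dots> = (\<integral>\<^sup>+x. ennreal \<bar>f0 x\<bar> * indicator E x \<partial>M) + (\<integral>\<^sup>+x. ennreal \<bar>f1 x\<bar> * indicator E x \<partial>M)"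
    using f E by (intro nn_integral_add) auto
  finally show ?thesis .
qed

lemma min_le_sigma_norm_indicator:
  assumes ps: "prob_space M" and cs: "nonatomic_measure M \<or> completely_atomic_equal M"
    and ri0: "ri_norm M \<rho>0" and ri1: "ri_norm M \<rho>1" and E: "E \<in> sets M"
  shows "min (\<rho>0 (indicator E)) (\<rho>1 (indicator E)) \<le> sigma_norm M \<rho>0 \<rho>1 (indicator E)"
  unfolding sigma_norm_def
proof (rule Inf_greatest, clarify)
  interpret prob_space M
    by (rule ps)
  fix f0 f1 assume f0: "f0 \<in> bfs M \<rho>0" and f1: "f1 \<in> bfs M \<rho>1"
    and split: "\<forall>x\<in>space M. indicator E x = f0 x + f1 x"
  define I0 where "I0 = (\<integral>\<^sup>+x. ennreal \<bar>f0 x\<bar> * indicator E x \<partial>M)"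
  define I1 where "I1 = (\<integral>\<^sup>+x. ennreal \<bar>f1 x\<bar> * indicator E x \<partial>M)"
  define \<phi>0 where "\<phi>0 = \<rho>0 (indicator E)"
  define \<phi>1 where "\<phi>1 = \<rho>1 (indicator E)"
  show "min \<phi>0 \<phi>1 \<le> bfs_norm \<rho>0 f0 + bfs_norm \<rho>1 f1"
  proof (cases "E \<in> null_sets M")
    case True
    then have "\<phi>0 = 0"
      unfolding \<phi>0_def using ri0 by (intro banach_function_norm_null_indicator ri_norm_banach_function_norm)
    then show ?thesis
      by simp
  next
    case False
    then have T: "emeasure M E \<noteq> 0" "emeasure M E \<noteq> top"
      using E by (auto simp: null_sets_def)
    have "emeasure M E \<le> I0 + I1"
      unfolding I0_def I1_def using f0 f1 split E unfolding bfs_def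
      by (intro emeasure_le_nn_integral_abs_split) (auto split: split_indicator_asm)
    then have "emeasure M E * min \<phi>0 \<phi>1 \<le> (I0 + I1) * min \<phi>0 \<phi>1"
      by (rule mult_right_mono) simp
    also have "\<dots> \<le> I0 * \<phi>0 + I1 * \<phi>1"
      by (simp add: distrib_right add_mono mult_left_mono)
    also have "\<dots> \<le> emeasure M E * bfs_norm \<rho>0 f0 + emeasure M E * bfs_norm \<rho>1 f1"
      unfolding I0_def I1_def \<phi>0_def \<phi>1_def bfs_norm_def using f0 f1 unfolding bfs_def
      by (intro add_mono ri_norm_nn_integral_indicator_bound[OF ps cs] ri0 ri1 E) auto
    also have "\<dots> = emeasure M E * (bfs_norm \<rho>0 f0 + bfs_norm \<rho>1 f1)"
      by (simp add: distrib_left)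
    finally show ?thesis
      using ennreal_mult_le_mult_iff[OF T] by simp
  qed
qed

theorem lemma40:
  fixes M :: "'a measure" and \<rho>0 \<rho>1 :: "('a \<Rightarrow> ennreal) \<Rightarrow> ennreal" and t :: real
  assumes "prob_space M"
    and "nonatomic_measure M \<or> completely_atomic_equal M"
    and "ri_norm M \<rho>0" and "ri_norm M \<rho>1"
    and "t \<in> measure M ` sets M"
  shows "fundamental_function M (delta_norm \<rho>0 \<rho>1) t
           = max (fundamental_function M (bfs_norm \<rho>0) t) (fundamental_function M (bfs_norm \<rho>1) t)
         \<and> fundamental_function M (sigma_norm M \<rho>0 \<rho>1) t
           = min (fundamental_function M (bfs_norm \<rho>0) t) (fundamental_function M (bfs_norm \<rho>1) t)"
proof -
  interpret prob_space M
    by fact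
  define E where "E = (SOME E. E \<in> sets M \<and> measure M E = t)"
  obtain E' where "E' \<in> sets M" "measure M E' = t"
    using assms(5) by auto
  then have "E \<in> sets M"
    unfolding E_def by (metis (mono_tags, lifting) someI)
  have fundamental: "fundamental_function M N t = N (indicator E)" for N
    unfolding fundamental_function_def E_def ..
  have "sigma_norm M \<rho>0 \<rho>1 (indicator E) \<le> min (\<rho>0 (indicator E)) (\<rho>1 (indicator E))"
    using assms(3,4) \<open>E \<in> sets M\<close>
    by (intro sigma_norm_indicator_le_min ri_norm_banach_function_norm) (auto simp: emeasure_eq_measure)
  moreover have "min (\<rho>0 (indicator E)) (\<rho>1 (indicator E)) \<le> sigma_norm M \<rho>0 \<rho>1 (indicator E)"
    using assms(1-4) \<open>E \<in> sets M\<close> by (rule min_le_sigma_norm_indicator)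
  ultimately have "sigma_norm M \<rho>0 \<rho>1 (indicator E) = min (\<rho>0 (indicator E)) (\<rho>1 (indicator E))"
    by (rule antisym)
  then show ?thesis
    unfolding fundamental delta_norm_def bfs_norm_indicator by simp
qed

end
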